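(* Let $0<\alpha<\beta$ and $0<c<\alpha$ be real constants and define $f(a,b)=\dfrac{a^2+b^2-c^2}{2ab}$ for $a,b\in[\alpha,\beta]$. Then \[\max_{a,b\in[\alpha,\beta]} f(a,b)=\max\left\{\frac{\alpha^2+\beta^2-c^2}{2\alpha\beta},\ 1-\frac{c^2}{2\beta^2}\right\}.\] *)

theory Defs
  imports Complex_Main
begin

definition cosf :: "real \<Rightarrow> real \<Rightarrow> real \<Rightarrow> real" where
  "cosf c a b = (a^2 + b^2 - c^2) / (2 * a * b)"

end

theory Submission
  imports Defs "HOL-Analysis.Convex"
begin

text \<open>For fixed \<open>b\<close> with \<open>c\<^sup>2 \<le> b\<^sup>2\<close>, \<open>a \<mapsto> cosf c a b = a / (2b) + (b\<^sup>2 - c\<^sup>2) / (2b a)\<close> is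
  convex on \<open>a > 0\<close>, so in each variable the maximum over an interval is attained at an endpoint.
  Hence the maximum over the square \<open>[\<alpha>, \<beta>]\<^sup>2\<close> is attained at a corner, and of the corners
  \<open>(\<alpha>, \<alpha>)\<close> is dominated by \<open>(\<beta>, \<beta>)\<close>, while \<open>(\<alpha>, \<beta>)\<close> and \<open>(\<beta>, \<alpha>)\<close> give the same value.\<close>

lemma cosf_commute: "cosf c a b = cosf c b a"
  by (simp add: cosf_def algebra_simps)

lemma cosf_diag:
  assumes "a \<noteq> 0"
  shows "cosf c a a = 1 - c^2 / (2 * a^2)"
  using assms by (simp add: cosf_def field_simps power2_eq_square)

lemma cosf_diag_mono:
  assumes "0 < a" "a \<le> b"
  shows "cosf c a a \<le> cosf c b b"
proof -
  have "c^2 / (2 * b^2) \<le> c^2 / (2 * a^2)"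
    using assms by (intro divide_left_mono mult_left_mono power_mono) auto
  then show ?thesis
    using assms by (simp add: cosf_diag)
qed

lemma convex_on_cosf:
  assumes "0 < b" "c^2 \<le> b^2" "S \<subseteq> {0<..}" "convex S"
  shows "convex_on S (\<lambda>a. cosf c a b)"
proof -
  \<comment> \<open>valid also at \<open>a = 0\<close>, where both sides are \<open>0\<close> by division by zero\<close>
  have "cosf c a b = 1 / (2 * b) * a + (b^2 - c^2) / (2 * b) * inverse a" for a
    using assms by (cases "a = 0") (simp_all add: cosf_def field_simps power2_eq_square)
  then have "(\<lambda>a. cosf c a b) = (\<lambda>a. 1 / (2 * b) * a + (b^2 - c^2) / (2 * b) * inverse a)"
    by blast
  moreover have "convex_on S (\<lambda>a. 1 / (2 * b) * a + (b^2 - c^2) / (2 * b) * inverse a)"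
    using assms by (intro convex_on_add convex_on_cmul convex_on_inverse)
      (auto simp: convex_on_ident)
  ultimately show ?thesis
    by simp
qed

lemma cosf_le_max_endpoints:
  assumes "0 < x" "c^2 \<le> x^2" "a \<in> {x..y}" "x \<le> b"
  shows "cosf c a b \<le> max (cosf c x b) (cosf c y b)"
proof -
  have "c^2 \<le> b^2"
    using assms by (meson order.trans less_imp_le power_mono)
  then show ?thesis
    using assms by (intro convex_on_le_max convex_on_cosf) auto
qed

lemma cosf_le_max_corners:
  assumes "0 < x" "c^2 \<le> x^2" "a \<in> {x..y}" "b \<in> {x..y}"
  shows "cosf c a b \<le> max (max (cosf c x x) (cosf c x y)) (cosf c y y)"
proof -
  have "cosf c a b \<le> max (cosf c x b) (cosf c y b)"
    using assms by (intro cosf_le_max_endpoints) auto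
  moreover have "cosf c x b \<le> max (cosf c x x) (cosf c x y)"
    using cosf_le_max_endpoints[of x c b y x] assms by (simp add: cosf_commute)
  moreover have "cosf c y b \<le> max (cosf c x y) (cosf c y y)"
    using cosf_le_max_endpoints[of x c b y y] assms by (simp add: cosf_commute)
  ultimately show ?thesis
    by linarith
qed

theorem lemma6p2:
  fixes \<alpha> \<beta> c :: real
  assumes "0 < \<alpha>" and "\<alpha> < \<beta>" and "0 < c" and "c < \<alpha>"
  defines "M \<equiv> max ((\<alpha>^2 + \<beta>^2 - c^2) / (2 * \<alpha> * \<beta>)) (1 - c^2 / (2 * \<beta>^2))"
  shows "(\<exists>a\<in>{\<alpha>..\<beta>}. \<exists>b\<in>{\<alpha>..\<beta>}. cosf c a b = M)
         \<and> (\<forall>a\<in>{\<alpha>..\<beta>}. \<forall>b\<in>{\<alpha>..\<beta>}. cosf c a b \<le> M)"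
proof -
  have M_corners: "M = max (cosf c \<alpha> \<beta>) (cosf c \<beta> \<beta>)"
    using assms by (simp add: M_def cosf_diag) (simp add: cosf_def)
  have "\<alpha> \<in> {\<alpha>..\<beta>}" "\<beta> \<in> {\<alpha>..\<beta>}"
    using assms by auto
  then have attained: "\<exists>a\<in>{\<alpha>..\<beta>}. \<exists>b\<in>{\<alpha>..\<beta>}. cosf c a b = M"
    unfolding M_corners max_def by (metis (full_types))
  have "c^2 \<le> \<alpha>^2"
    using assms by (intro power_mono) auto
  moreover have "cosf c \<alpha> \<alpha> \<le> cosf c \<beta> \<beta>"
    using assms by (intro cosf_diag_mono) auto
  ultimately have "\<forall>a\<in>{\<alpha>..\<beta>}. \<forall>b\<in>{\<alpha>..\<beta>}. cosf c a b \<le> M"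
    using cosf_le_max_corners[of \<alpha> c] assms unfolding M_corners by fastforce
  with attained show ?thesis
    by blast
qed

end
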